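(* Let $P=(|P|,\preccurlyeq)$ be a finite poset and $S\subseteq|P|$ a chain. Then there is a partial ordering $\preccurlyeq'$ on $|P|$ extending $\preccurlyeq$ (i.e. $x\preccurlyeq y\Rightarrow x\preccurlyeq' y$) such that $|P|\setminus S$ is a chain under $\preccurlyeq'$, and every element of $|P|$ that is $\preccurlyeq$-incomparable with at least one element of $S$ is also $\preccurlyeq'$-incomparable with at least one element of $S$. *)

theory Defs
  imports Main
begin

end

theory Submission
  imports Defs "HOL-Library.Product_Lexorder"
begin

text \<open>
  Rank the finite poset injectively and monotonically by some \<open>h\<close> and order points by the
  lexicographic key \<open>key x = (#{s\<in>S. s \<preccurlyeq> x}, |S| - #{s\<in>S. x \<preccurlyeq> s}, h x)\<close>. The key is
  monotone and injective, so adding all pairs \<open>x \<preccurlyeq> u\<close>, \<open>key u \<le> key v\<close>, \<open>v \<preccurlyeq> y\<close> with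
  \<open>u, v \<notin> S\<close> yields a partial order in which \<open>|P| - S\<close> is ordered by the key.
  If \<open>x\<close> is incomparable with some element of \<open>S\<close>, the least element \<open>s\<close> of \<open>S\<close> not below
  \<open>x\<close> stays incomparable with \<open>x\<close>. As \<open>S\<close> is a chain, the parts of \<open>S\<close> below (above) two
  points are nested, so \<open>key u \<le> key v\<close> forces the part of \<open>S\<close> below \<open>u\<close> into the part
  below \<open>v\<close> and, when these parts coincide, the part above \<open>v\<close> into the part above \<open>u\<close>;
  a new comparability between \<open>x\<close> and \<open>s\<close> therefore yields an old one.
\<close>

definition linearize_on :: "'a rel \<Rightarrow> 'a set \<Rightarrow> ('a \<Rightarrow> 'b::linorder) \<Rightarrow> 'a rel" where
  "linearize_on r T g = r \<union> {(x, y). \<exists>u\<in>T. \<exists>v\<in>T. (x, u) \<in> r \<and> g u \<le> g v \<and> (v, y) \<in> r}"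

lemma linearize_on_subset:
  assumes "r \<subseteq> A \<times> A"
  shows "linearize_on r T g \<subseteq> A \<times> A"
  using assms unfolding linearize_on_def by blast

lemma linearize_on_mono_key:
  assumes "\<And>u v. (u, v) \<in> r \<Longrightarrow> g u \<le> g v" and "(x, y) \<in> linearize_on r T g"
  shows "g x \<le> g y"
  using assms unfolding linearize_on_def by (blast intro: order_trans)

lemma trans_linearize_on:
  assumes "trans r" and mono: "\<And>u v. (u, v) \<in> r \<Longrightarrow> g u \<le> g v"
  shows "trans (linearize_on r T g)"
proof (rule transI)
  fix x y z
  assume xy: "(x, y) \<in> linearize_on r T g" and yz: "(y, z) \<in> linearize_on r T g"
  have r_trans: "\<And>a b c. (a, b) \<in> r \<Longrightarrow> (b, c) \<in> r \<Longrightarrow> (a, c) \<in> r"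
    using \<open>trans r\<close> by (rule transD)
  from xy consider "(x, y) \<in> r"
    | u v where "u \<in> T" "v \<in> T" "(x, u) \<in> r" "g u \<le> g v" "(v, y) \<in> r"
    unfolding linearize_on_def by blast
  then show "(x, z) \<in> linearize_on r T g"
  proof cases
    case 1
    with yz show ?thesis unfolding linearize_on_def by (blast intro: r_trans)
  next
    case (2 u v)
    from yz consider "(y, z) \<in> r"
      | u' v' where "u' \<in> T" "v' \<in> T" "(y, u') \<in> r" "g u' \<le> g v'" "(v', z) \<in> r"
      unfolding linearize_on_def by blast
    then show ?thesis
    proof cases
      case 1
      with 2 show ?thesis unfolding linearize_on_def by (blast intro: r_trans)
    next
      case (2 u' v')
      have "g v \<le> g u'" using \<open>(v, y) \<in> r\<close> \<open>(y, u') \<in> r\<close> by (blast intro: mono r_trans)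
      then have "g u \<le> g v'" using \<open>g u \<le> g v\<close> \<open>g u' \<le> g v'\<close> by order
      with 2 \<open>u \<in> T\<close> \<open>(x, u) \<in> r\<close> show ?thesis unfolding linearize_on_def by blast
    qed
  qed
qed

lemma partial_order_on_linearize_on:
  assumes "partial_order_on A r" and "inj_on g A" and "\<And>u v. (u, v) \<in> r \<Longrightarrow> g u \<le> g v"
  shows "partial_order_on A (linearize_on r T g)"
proof -
  have field: "r \<subseteq> A \<times> A" using partial_order_onD(4)[OF assms(1)] .
  have "antisym (linearize_on r T g)"
  proof (rule antisymI)
    fix x y
    assume "(x, y) \<in> linearize_on r T g" and "(y, x) \<in> linearize_on r T g"
    moreover from this have "x \<in> A" "y \<in> A"
      using linearize_on_subset[OF field] by blast+
    ultimately show "x = y"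
      using linearize_on_mono_key[of r g] assms(2,3) by (metis inj_onD order_antisym)
  qed
  moreover have "refl_on A (linearize_on r T g)"
    using partial_order_onD(1)[OF assms(1)] unfolding refl_on_def linearize_on_def by blast
  ultimately show ?thesis
    using linearize_on_subset[OF field] trans_linearize_on[OF partial_order_onD(2)[OF assms(1)]] assms(3)
    unfolding partial_order_on_def preorder_on_def by blast
qed

lemma linearize_on_total:
  assumes "refl_on A r" and "T \<subseteq> A" and "x \<in> T" and "y \<in> T"
  shows "(x, y) \<in> linearize_on r T g \<or> (y, x) \<in> linearize_on r T g"
  using assms linear[of "g x" "g y"] unfolding linearize_on_def refl_on_def by blast

lemma finite_partial_order_on_rank:
  assumes "finite A" and "partial_order_on A r"
  shows "\<exists>h :: 'a \<Rightarrow> nat \<times> nat. inj_on h A \<and> (\<forall>u v. (u, v) \<in> r \<longrightarrow> h u \<le> h v)"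
proof -
  obtain f :: "'a \<Rightarrow> nat" where "inj_on f A"
    using finite_imp_inj_to_nat_seg[OF assms(1)] by blast
  define down where "down x = {w \<in> A. (w, x) \<in> r}" for x
  have "card (down u) < card (down v)" if "(u, v) \<in> r" "u \<noteq> v" for u v
  proof (rule psubset_card_mono)
    show "finite (down v)" using assms(1) by (simp add: down_def)
    show "down u \<subset> down v"
      using that partial_order_onD[OF assms(2)]
      unfolding down_def refl_on_def antisym_def trans_def by blast
  qed
  then have "\<forall>u v. (u, v) \<in> r \<longrightarrow> (card (down u), f u) \<le> (card (down v), f v)"
    by (auto simp: less_eq_prod_def)
  with \<open>inj_on f A\<close> show ?thesis
    by (intro exI[of _ "\<lambda>x. (card (down x), f x)"]) (auto simp: inj_on_def)
qed

definition below_in :: "'a rel \<Rightarrow> 'a set \<Rightarrow> 'a \<Rightarrow> 'a set" where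
  "below_in r S x = {s \<in> S. (s, x) \<in> r}"

abbreviation above_in :: "'a rel \<Rightarrow> 'a set \<Rightarrow> 'a \<Rightarrow> 'a set" where
  "above_in r S x \<equiv> below_in (r\<inverse>) S x"

lemma below_in_nested:
  assumes "trans r" and "\<And>a b. a \<in> S \<Longrightarrow> b \<in> S \<Longrightarrow> (a, b) \<in> r \<or> (b, a) \<in> r"
  shows "below_in r S u \<subseteq> below_in r S v \<or> below_in r S v \<subseteq> below_in r S u"
  using assms unfolding below_in_def trans_def by blast

lemma subset_if_card_le_nested:
  assumes "finite A" and "A \<subseteq> B \<or> B \<subseteq> A" and "card A \<le> card B"
  shows "A \<subseteq> B"
  using assms card_seteq by auto

locale ranked_poset_chain =
  fixes P :: "'a set" and r :: "'a rel" and S :: "'a set" and h :: "'a \<Rightarrow> 'b::linorder"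
  assumes partial_order: "partial_order_on P r"
    and finite_chain: "finite S"
    and chain: "\<And>a b. a \<in> S \<Longrightarrow> b \<in> S \<Longrightarrow> (a, b) \<in> r \<or> (b, a) \<in> r"
    and inj_rank: "inj_on h P" and mono_rank: "\<And>u v. (u, v) \<in> r \<Longrightarrow> h u \<le> h v"
begin

lemma rel_in_carrier: "(x, y) \<in> r \<Longrightarrow> x \<in> P \<and> y \<in> P"
  using partial_order_onD(4)[OF partial_order] by blast

lemma trans_rel: "trans r"
  using partial_order_onD(2)[OF partial_order] .

lemma rel_trans: "(x, y) \<in> r \<Longrightarrow> (y, z) \<in> r \<Longrightarrow> (x, z) \<in> r"
  using trans_rel by (rule transD)

lemma rel_antisym: "(x, y) \<in> r \<Longrightarrow> (y, x) \<in> r \<Longrightarrow> x = y"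
  using partial_order_onD(3)[OF partial_order] by (rule antisymD)

lemma rank_less: "(u, v) \<in> r \<Longrightarrow> u \<noteq> v \<Longrightarrow> h u < h v"
  using mono_rank inj_rank rel_in_carrier by (metis inj_onD order_neq_le_trans)

definition key :: "'a \<Rightarrow> nat \<times> nat \<times> 'b" where
  "key x = (card (below_in r S x), card S - card (above_in r S x), h x)"

lemma key_mono: "(u, v) \<in> r \<Longrightarrow> key u \<le> key v"
proof -
  assume uv: "(u, v) \<in> r"
  have "below_in r S u \<subseteq> below_in r S v" "above_in r S v \<subseteq> above_in r S u"
    using uv rel_trans unfolding below_in_def by blast+
  then have "card (below_in r S u) \<le> card (below_in r S v)"
    "card S - card (above_in r S u) \<le> card S - card (above_in r S v)"
    using finite_chain by (auto intro!: card_mono diff_le_mono2 simp: below_in_def)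
  with mono_rank[OF uv] show ?thesis by (auto simp: key_def less_eq_prod_def)
qed

lemma inj_on_key: "inj_on key P"
  using inj_rank by (auto simp: inj_on_def key_def)

lemma below_in_subset_if_key_le:
  assumes "key u \<le> key v"
  shows "below_in r S u \<subseteq> below_in r S v"
proof (rule subset_if_card_le_nested)
  show "finite (below_in r S u)" using finite_chain by (simp add: below_in_def)
  show "below_in r S u \<subseteq> below_in r S v \<or> below_in r S v \<subseteq> below_in r S u"
    using trans_rel chain by (rule below_in_nested)
  show "card (below_in r S u) \<le> card (below_in r S v)"
    using assms by (auto simp: key_def less_eq_prod_def)
qed

lemma above_in_subset_if_key_le:
  assumes "key u \<le> key v" and "below_in r S v \<subseteq> below_in r S u"
  shows "above_in r S v \<subseteq> above_in r S u"
proof (rule subset_if_card_le_nested)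
  have "card (below_in r S v) \<le> card (below_in r S u)"
    using assms(2) finite_chain by (intro card_mono) (simp_all add: below_in_def)
  then have "card S - card (above_in r S u) \<le> card S - card (above_in r S v)"
    using assms(1) by (auto simp: key_def less_eq_prod_def)
  moreover have bound: "card (above_in r S x) \<le> card S" for x
    using finite_chain by (intro card_mono) (auto simp: below_in_def)
  ultimately show "card (above_in r S v) \<le> card (above_in r S u)"
    using bound[of u] bound[of v] by linarith
  show "finite (above_in r S v)" using finite_chain by (simp add: below_in_def)
  show "above_in r S v \<subseteq> above_in r S u \<or> above_in r S u \<subseteq> above_in r S v"
    using trans_rel chain by (intro below_in_nested) auto
qed

abbreviation r' :: "'a rel" where
  "r' \<equiv> linearize_on r (P - S) key"

lemma least_not_below:
  assumes "t \<in> S" and "(t, x) \<notin> r"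
  obtains s where "s \<in> S" "(s, x) \<notin> r" "\<And>w. w \<in> S \<Longrightarrow> (w, s) \<in> r \<Longrightarrow> w \<noteq> s \<Longrightarrow> (w, x) \<in> r"
proof -
  define A where "A = S - below_in r S x"
  have A: "finite A" "A \<noteq> {}"
    using assms finite_chain by (auto simp: A_def below_in_def)
  define s where "s = arg_min_on h A"
  have "s \<in> A" using arg_min_if_finite(1)[OF A(1,2)] by (simp add: s_def)
  moreover have "(w, x) \<in> r" if "w \<in> S" "(w, s) \<in> r" "w \<noteq> s" for w
  proof (rule ccontr)
    assume "(w, x) \<notin> r"
    with \<open>w \<in> S\<close> have "w \<in> A" by (simp add: A_def below_in_def)
    then have "h s \<le> h w" unfolding s_def by (rule arg_min_least[OF A(1,2)])
    with rank_less[OF that(2,3)] show False by simp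
  qed
  ultimately show ?thesis using that by (auto simp: A_def below_in_def)
qed

lemma linearize_on_keeps_incomparable:
  assumes "t \<in> S" and "(x, t) \<notin> r" and "(t, x) \<notin> r"
  shows "\<exists>s\<in>S. (x, s) \<notin> r' \<and> (s, x) \<notin> r'"
proof -
  obtain s where s: "s \<in> S" "(s, x) \<notin> r"
    and least: "\<And>w. w \<in> S \<Longrightarrow> (w, s) \<in> r \<Longrightarrow> w \<noteq> s \<Longrightarrow> (w, x) \<in> r"
    using least_not_below[OF assms(1,3)] by blast
  have xs: "(x, s) \<notin> r"
  proof
    assume "(x, s) \<in> r"
    with assms chain[OF s(1) assms(1)] least[of t] show False by (blast intro: rel_trans)
  qed
  have "(x, s) \<notin> r'"
  proof
    assume "(x, s) \<in> r'"
    then obtain u v where uv: "u \<in> P - S" "v \<in> P - S" "(x, u) \<in> r" "key u \<le> key v" "(v, s) \<in> r"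
      using xs unfolding linearize_on_def by blast
    have "below_in r S v \<subseteq> below_in r S x"
    proof
      fix w assume "w \<in> below_in r S v"
      then have w: "w \<in> S" "(w, v) \<in> r" by (auto simp: below_in_def)
      have "w \<noteq> s" using w uv rel_antisym by blast
      with w uv least show "w \<in> below_in r S x" by (auto simp: below_in_def intro: rel_trans)
    qed
    also have "\<dots> \<subseteq> below_in r S u" using uv by (auto simp: below_in_def intro: rel_trans)
    finally have "above_in r S v \<subseteq> above_in r S u"
      using above_in_subset_if_key_le[OF uv(4)] by blast
    then have "(u, s) \<in> r" using uv s by (auto simp: below_in_def)
    with xs uv show False by (blast intro: rel_trans)
  qed
  moreover have "(s, x) \<notin> r'"
  proof
    assume "(s, x) \<in> r'"
    then obtain u v where uv: "(s, u) \<in> r" "key u \<le> key v" "(v, x) \<in> r"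
      using s unfolding linearize_on_def by blast
    then have "s \<in> below_in r S v"
      using below_in_subset_if_key_le s by (auto simp: below_in_def)
    with uv s show False by (auto simp: below_in_def intro: rel_trans)
  qed
  ultimately show ?thesis using s by blast
qed

end

theorem lemma5p4:
  fixes P :: "'a set" and r :: "'a rel" and S :: "'a set"
  assumes "finite P"
    and "r \<subseteq> P \<times> P" and "partial_order_on P r"
    and "S \<subseteq> P"
    and "\<forall>x\<in>S. \<forall>y\<in>S. (x, y) \<in> r \<or> (y, x) \<in> r"
  shows "\<exists>r'. r' \<subseteq> P \<times> P \<and> partial_order_on P r' \<and> r \<subseteq> r'
    \<and> (\<forall>x\<in>P - S. \<forall>y\<in>P - S. (x, y) \<in> r' \<or> (y, x) \<in> r')
    \<and> (\<forall>x\<in>P. (\<exists>s\<in>S. (x, s) \<notin> r \<and> (s, x) \<notin> r)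
                \<longrightarrow> (\<exists>s\<in>S. (x, s) \<notin> r' \<and> (s, x) \<notin> r'))"
proof -
  obtain h :: "'a \<Rightarrow> nat \<times> nat" where h: "inj_on h P" "\<And>u v. (u, v) \<in> r \<Longrightarrow> h u \<le> h v"
    using finite_partial_order_on_rank[OF assms(1,3)] by blast
  interpret ranked_poset_chain P r S h
    using assms(3,5) finite_subset[OF assms(4,1)] h by unfold_locales auto
  show ?thesis
  proof (intro exI conjI)
    show "r' \<subseteq> P \<times> P" using assms(2) by (rule linearize_on_subset)
    show "partial_order_on P r'"
      using assms(3) inj_on_key key_mono by (rule partial_order_on_linearize_on)
    show "r \<subseteq> r'" unfolding linearize_on_def by blast
    show "\<forall>x\<in>P - S. \<forall>y\<in>P - S. (x, y) \<in> r' \<or> (y, x) \<in> r'"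
      using linearize_on_total[OF partial_order_onD(1)[OF assms(3)] Diff_subset] by blast
    show "\<forall>x\<in>P. (\<exists>s\<in>S. (x, s) \<notin> r \<and> (s, x) \<notin> r) \<longrightarrow> (\<exists>s\<in>S. (x, s) \<notin> r' \<and> (s, x) \<notin> r')"
      using linearize_on_keeps_incomparable by auto
  qed
qed

end
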